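(* Let $d\ge2$, $n\ge1$ be integers and, for real $b,c$, let $$\rho_{bc}=a\sum_{i=0}^{d-1}|ii\rangle\langle ii|+b\sum_{i<j}|\psi^-_{ij}\rangle\langle\psi^-_{ij}|+c\sum_{i<j}|\psi^+_{ij}\rangle\langle\psi^+_{ij}|,\quad a=\frac1d\Big(1-(b+c)\frac{d(d-1)}2\Big).$$ Let $B=\big(\tfrac{1}{d(d-1)},0\big)$, $G=\big(\tfrac{3}{d(2d-1)},\tfrac{1}{d(2d-1)}\big)$, $K=\big(\tfrac1{d(d-1)},\tfrac1{d(d-1)}\big)$. If $\rho_{G}$ (the state $\rho_{bc}$ with $(b,c)=G$) is pseudo $n$-copy undistillable, then $\rho_{bc}$ is pseudo $n$-copy undistillable for every $(b,c)$ in the triangle (convex hull) $BGK$.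
   Context: $|\psi^{\pm}_{ij}\rangle=\frac1{\sqrt2}(|ij\rangle\pm|ji\rangle)$, sums over $0\le i<j\le d-1$. For a bipartite state $\rho$ on $\mathcal{H}_A\otimes\mathcal{H}_B$, $\rho^{PT}$ is the partial transpose on $\mathcal{H}_B$. $\rho$ is pseudo one-copy undistillable if $\langle\phi|\rho^{PT}|\phi\rangle\ge0$ for all $|\phi\rangle$ of Schmidt rank two; $\rho$ is pseudo $n$-copy undistillable if $\rho^{\otimes n}$, viewed as a bipartite state on $\mathcal{H}_A^{\otimes n}\otimes\mathcal{H}_B^{\otimes n}$, is pseudo one-copy undistillable. *)

theory Defs
  imports "HOL-Analysis.Analysis"
begin

text \<open>Two-qudit space C^d (x) C^d: vectors indexed by pairs (i,j) with i,j < d.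
  Computational basis ket |ij>.\<close>
definition ket2 :: "nat \<Rightarrow> nat \<Rightarrow> nat \<times> nat \<Rightarrow> complex" where
  "ket2 i j = (\<lambda>(k,l). if k = i \<and> l = j then 1 else 0)"

definition psi :: "complex \<Rightarrow> nat \<Rightarrow> nat \<Rightarrow> nat \<times> nat \<Rightarrow> complex" where
  "psi s i j = (\<lambda>u. (ket2 i j u + s * ket2 j i u) / complex_of_real (sqrt 2))"

definition proj :: "('i \<Rightarrow> complex) \<Rightarrow> 'i \<Rightarrow> 'i \<Rightarrow> complex" where
  "proj v = (\<lambda>u u'. v u * cnj (v u'))"

definition pairs_lt :: "nat \<Rightarrow> (nat \<times> nat) set" where
  "pairs_lt d = {(i,j). i < j \<and> j < d}"

definition coef_a :: "nat \<Rightarrow> real \<Rightarrow> real \<Rightarrow> real" where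
  "coef_a d b c = (1 - (b + c) * (real d * (real d - 1) / 2)) / real d"

definition rho_bc :: "nat \<Rightarrow> real \<Rightarrow> real \<Rightarrow> nat \<times> nat \<Rightarrow> nat \<times> nat \<Rightarrow> complex" where
  "rho_bc d b c = (\<lambda>u u'.
      complex_of_real (coef_a d b c) * (\<Sum>i<d. proj (ket2 i i) u u')
    + complex_of_real b * (\<Sum>(i,j)\<in>pairs_lt d. proj (psi (-1) i j) u u')
    + complex_of_real c * (\<Sum>(i,j)\<in>pairs_lt d. proj (psi 1 i j) u u'))"

text \<open>Basis of (C^d)^{(x) n}: lists of length n with entries < d.\<close>
definition idx :: "nat \<Rightarrow> nat \<Rightarrow> nat list set" where
  "idx d n = {xs. length xs = n \<and> set xs \<subseteq> {..<d}}"

text \<open>rho^{(x) n} regrouped as an operator on H_A^{(x)n} (x) H_B^{(x)n}.\<close>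
definition tensor_pow ::
  "(nat \<times> nat \<Rightarrow> nat \<times> nat \<Rightarrow> complex) \<Rightarrow> nat \<Rightarrow>
   nat list \<times> nat list \<Rightarrow> nat list \<times> nat list \<Rightarrow> complex" where
  "tensor_pow rho n = (\<lambda>(xs,ys) (xs',ys'). \<Prod>k<n. rho (xs!k, ys!k) (xs'!k, ys'!k))"

definition partial_transpose :: "('a \<times> 'b \<Rightarrow> 'a \<times> 'b \<Rightarrow> complex) \<Rightarrow> 'a \<times> 'b \<Rightarrow> 'a \<times> 'b \<Rightarrow> complex" where
  "partial_transpose M = (\<lambda>(x,y) (x',y'). M (x,y') (x',y))"

definition lin_indep2 :: "'a set \<Rightarrow> ('a \<Rightarrow> complex) \<Rightarrow> ('a \<Rightarrow> complex) \<Rightarrow> bool" where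
  "lin_indep2 I v w \<longleftrightarrow> (\<forall>\<alpha> \<beta>. (\<forall>x\<in>I. \<alpha> * v x + \<beta> * w x = 0) \<longrightarrow> \<alpha> = 0 \<and> \<beta> = 0)"

definition schmidt_rank_two :: "'a set \<Rightarrow> 'b set \<Rightarrow> ('a \<times> 'b \<Rightarrow> complex) \<Rightarrow> bool" where
  "schmidt_rank_two I J \<phi> \<longleftrightarrow> (\<exists>a1 a2 b1 b2.
     lin_indep2 I a1 a2 \<and> lin_indep2 J b1 b2 \<and>
     (\<forall>x\<in>I. \<forall>y\<in>J. \<phi> (x,y) = a1 x * b1 y + a2 x * b2 y))"

definition qform :: "'a set \<Rightarrow> 'b set \<Rightarrow> ('a \<times> 'b \<Rightarrow> 'a \<times> 'b \<Rightarrow> complex) \<Rightarrow> ('a \<times> 'b \<Rightarrow> complex) \<Rightarrow> complex" where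
  "qform I J M \<phi> = (\<Sum>u\<in>I \<times> J. \<Sum>v\<in>I \<times> J. cnj (\<phi> u) * M u v * \<phi> v)"

definition cnonneg :: "complex \<Rightarrow> bool" where
  "cnonneg z \<longleftrightarrow> Im z = 0 \<and> Re z \<ge> 0"

definition pseudo_one_copy_undist :: "'a set \<Rightarrow> 'b set \<Rightarrow> ('a \<times> 'b \<Rightarrow> 'a \<times> 'b \<Rightarrow> complex) \<Rightarrow> bool" where
  "pseudo_one_copy_undist I J M \<longleftrightarrow>
     (\<forall>\<phi>. schmidt_rank_two I J \<phi> \<longrightarrow> cnonneg (qform I J (partial_transpose M) \<phi>))"

definition pseudo_n_copy_undist :: "nat \<Rightarrow> nat \<Rightarrow> (nat \<times> nat \<Rightarrow> nat \<times> nat \<Rightarrow> complex) \<Rightarrow> bool" where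
  "pseudo_n_copy_undist d n rho \<longleftrightarrow>
     pseudo_one_copy_undist (idx d n) (idx d n) (tensor_pow rho n)"

end

theory Submission
  imports Defs "HOL-Library.NList"
begin

text \<open>Write P(\<alpha>, \<beta>, \<gamma>) (pt_pattern) for the matrix with entry \<alpha> at (ii, ii), \<gamma> at
  (ii, jj) and \<beta> at (ij, ij) for i \<noteq> j, so that rho_bc^PT = P(a, (b+c)/2, (c-b)/2). For
  (b, c) = u B + v G + w K in the triangle,
  rho_bc^PT = v rho_G^PT + u/(2d(d-1)) P(d-1, 1, -1) + w/(d(d-1)) P(0, 1, 0),
  and the last two matrices are positive combinations of product projectors |a><a| (x) |b><b|. Each
  such projector is (A (x) B) rho_G^PT (A (x) B)^* for rank-one local operators A, B, because
  rho_G^PT has a positive entry at (01, 01). So rho_bc^PT is a sum of local sandwiches of rho_G^PT,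
  and then (rho_bc^(x)n)^PT is one of (rho_G^(x)n)^PT. The adjoints of local operators map vectors
  of Schmidt rank at most two to such vectors, and on them (rho_G^(x)n)^PT is nonnegative: on rank
  exactly two by hypothesis, and on product vectors a (x) b because there the partial transpose
  only conjugates b and rho_G^(x)n is positive semidefinite.\<close>

section \<open>Products of sums as sums over index lists\<close>

lemma nlists_Suc_Cons: "nlists (Suc n) A = (\<lambda>(a, as). a # as) ` (A \<times> nlists n A)"
  by (auto simp: in_nlists_Suc_iff image_iff)

lemma inj_on_Cons_nlists: "inj_on (\<lambda>(a, as). a # as) (A \<times> nlists n A)"
  by (simp add: inj_on_def)

lemma prod_sum_nlists:
  fixes f :: "nat \<Rightarrow> 'a \<Rightarrow> 'b::comm_semiring_1"
  assumes "finite A"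
  shows "(\<Prod>k<n. \<Sum>a\<in>A. f k a) = (\<Sum>as\<in>nlists n A. \<Prod>k<n. f k (as!k))"
proof (induction n arbitrary: f)
  case 0
  show ?case by simp
next
  case (Suc n)
  have "(\<Prod>k<Suc n. \<Sum>a\<in>A. f k a) = (\<Sum>a\<in>A. f 0 a) * (\<Sum>as\<in>nlists n A. \<Prod>k<n. f (Suc k) (as!k))"
    by (simp only: prod.lessThan_Suc_shift Suc)
  also have "\<dots> = (\<Sum>(a, as)\<in>A \<times> nlists n A. f 0 a * (\<Prod>k<n. f (Suc k) (as!k)))"
    by (simp add: sum.cartesian_product[symmetric] sum_product)
  also have "\<dots> = (\<Sum>(a, as)\<in>A \<times> nlists n A. \<Prod>k<Suc n. f k ((a # as)!k))"
    by (simp only: prod.lessThan_Suc_shift nth_Cons_0 nth_Cons_Suc)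
  also have "\<dots> = (\<Sum>as\<in>nlists (Suc n) A. \<Prod>k<Suc n. f k (as!k))"
    unfolding nlists_Suc_Cons sum.reindex[OF inj_on_Cons_nlists] by (simp add: comp_def case_prod_beta)
  finally show ?case .
qed

lemma idx_eq_nlists: "idx d n = nlists n {..<d}"
  unfolding idx_def nlists_def by (simp add: conj_commute)

lemma sum_cartesian: "(\<Sum>u\<in>A \<times> B. f u) = (\<Sum>x\<in>A. \<Sum>y\<in>B. f (x, y))"
  by (subst sum.cartesian_product) simp

lemma qform_cong:
  assumes "\<And>u v. u \<in> I \<times> J \<Longrightarrow> v \<in> I \<times> J \<Longrightarrow> M u v = M' u v"
    and "\<And>u. u \<in> I \<times> J \<Longrightarrow> \<phi> u = \<phi>' u"
  shows "qform I J M \<phi> = qform I J M' \<phi>'"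
  unfolding qform_def using assms by (intro sum.cong refl) auto

lemma qform_sum: "qform I J (\<lambda>u v. \<Sum>s\<in>S. M s u v) \<phi> = (\<Sum>s\<in>S. qform I J (M s) \<phi>)"
proof -
  have "qform I J (\<lambda>u v. \<Sum>s\<in>S. M s u v) \<phi> =
      (\<Sum>u\<in>I \<times> J. \<Sum>v\<in>I \<times> J. \<Sum>s\<in>S. cnj (\<phi> u) * M s u v * \<phi> v)"
    unfolding qform_def by (simp add: sum_distrib_left sum_distrib_right)
  also have "\<dots> = (\<Sum>u\<in>I \<times> J. \<Sum>s\<in>S. \<Sum>v\<in>I \<times> J. cnj (\<phi> u) * M s u v * \<phi> v)"
    by (intro sum.cong refl sum.swap)
  also have "\<dots> = (\<Sum>s\<in>S. \<Sum>u\<in>I \<times> J. \<Sum>v\<in>I \<times> J. cnj (\<phi> u) * M s u v * \<phi> v)"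
    by (rule sum.swap)
  finally show ?thesis
    unfolding qform_def .
qed

lemma qform_rank_one:
  "qform I J (\<lambda>u v. of_real r * (w u * cnj (w v))) \<phi> =
   of_real (r * (cmod (\<Sum>u\<in>I \<times> J. cnj (w u) * \<phi> u))\<^sup>2)"
proof -
  let ?s = "\<Sum>u\<in>I \<times> J. cnj (w u) * \<phi> u"
  have "qform I J (\<lambda>u v. of_real r * (w u * cnj (w v))) \<phi> = of_real r * (cnj ?s * ?s)"
    unfolding qform_def by (simp add: sum_distrib_left sum_distrib_right sum_product mult_ac)
  moreover have "cnj z * z = of_real ((cmod z)\<^sup>2)" for z
    by (simp only: complex_norm_square mult.commute)
  ultimately show ?thesis
    by (simp only: of_real_mult)
qed

lemma cnonneg_sum: "(\<And>s. s \<in> S \<Longrightarrow> cnonneg (f s)) \<Longrightarrow> cnonneg (sum f S)"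
  unfolding cnonneg_def by (simp add: Im_sum Re_sum sum_nonneg)

lemma cnonneg_of_real: "0 \<le> r \<Longrightarrow> cnonneg (of_real r)"
  by (simp add: cnonneg_def)

section \<open>Local sandwiches and vectors of Schmidt rank at most two\<close>

definition local_sandwich ::
  "'a set \<Rightarrow> 'b set \<Rightarrow> ('a \<Rightarrow> 'a \<Rightarrow> complex) \<Rightarrow> ('b \<Rightarrow> 'b \<Rightarrow> complex) \<Rightarrow>
   ('a \<times> 'b \<Rightarrow> 'a \<times> 'b \<Rightarrow> complex) \<Rightarrow> 'a \<times> 'b \<Rightarrow> 'a \<times> 'b \<Rightarrow> complex" where
  "local_sandwich I J A B X = (\<lambda>(x, y) (x', y'). \<Sum>p\<in>I. \<Sum>q\<in>J. \<Sum>p'\<in>I. \<Sum>q'\<in>J.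
      A x p * B y q * X (p, q) (p', q') * cnj (A x' p') * cnj (B y' q'))"

definition schmidt_rank_le2 :: "'a set \<Rightarrow> 'b set \<Rightarrow> ('a \<times> 'b \<Rightarrow> complex) \<Rightarrow> bool" where
  "schmidt_rank_le2 I J \<phi> \<longleftrightarrow>
     (\<exists>a1 a2 b1 b2. \<forall>x\<in>I. \<forall>y\<in>J. \<phi> (x, y) = a1 x * b1 y + a2 x * b2 y)"

lemma schmidt_rank_two_le2: "schmidt_rank_two I J \<phi> \<Longrightarrow> schmidt_rank_le2 I J \<phi>"
  unfolding schmidt_rank_two_def schmidt_rank_le2_def by blast

lemma sum_nested4_swap:
  "(\<Sum>p\<in>I. \<Sum>q\<in>J. \<Sum>p'\<in>I. \<Sum>q'\<in>J. \<Sum>x\<in>I. \<Sum>y\<in>J. \<Sum>x'\<in>I. \<Sum>y'\<in>J. f p q p' q' x y x' y') =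
   (\<Sum>x\<in>I. \<Sum>y\<in>J. \<Sum>x'\<in>I. \<Sum>y'\<in>J. \<Sum>p\<in>I. \<Sum>q\<in>J. \<Sum>p'\<in>I. \<Sum>q'\<in>J. f p q p' q' x y x' y')"
proof -
  have flat: "(\<Sum>p\<in>I. \<Sum>q\<in>J. \<Sum>p'\<in>I. \<Sum>q'\<in>J. g p q p' q') =
      (\<Sum>(p, q, p', q')\<in>I \<times> J \<times> I \<times> J. g p q p' q')" for g
    by (simp add: sum.cartesian_product[symmetric])
  show ?thesis
    by (simp only: flat split_def) (rule sum.swap)
qed

lemma sum_nested2_mult:
  "(\<Sum>x\<in>I. \<Sum>y\<in>J. f x y) * (c::complex) * (\<Sum>x'\<in>I. \<Sum>y'\<in>J. g x' y') =
   (\<Sum>x\<in>I. \<Sum>y\<in>J. \<Sum>x'\<in>I. \<Sum>y'\<in>J. f x y * c * g x' y')"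
  by (simp only: sum_distrib_right) (simp only: sum_distrib_left)

lemma mult_sum_nested4:
  "(c::complex) * (\<Sum>p\<in>I. \<Sum>q\<in>J. \<Sum>p'\<in>I. \<Sum>q'\<in>J. f p q p' q') * c' =
   (\<Sum>p\<in>I. \<Sum>q\<in>J. \<Sum>p'\<in>I. \<Sum>q'\<in>J. c * f p q p' q' * c')"
  by (simp only: sum_distrib_left) (simp only: sum_distrib_right)

lemma qform_local_sandwich:
  "qform I J (local_sandwich I J A B X) \<phi> =
   qform I J X (\<lambda>(p, q). \<Sum>x\<in>I. \<Sum>y\<in>J. cnj (A x p) * cnj (B y q) * \<phi> (x, y))"
proof -
  let ?T = "\<lambda>p q p' q' x y x' y'. cnj (\<phi> (x, y)) * A x p * B y q * X (p, q) (p', q') *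
    cnj (A x' p') * cnj (B y' q') * \<phi> (x', y')"
  have "qform I J (local_sandwich I J A B X) \<phi> = (\<Sum>x\<in>I. \<Sum>y\<in>J. \<Sum>x'\<in>I. \<Sum>y'\<in>J.
      \<Sum>p\<in>I. \<Sum>q\<in>J. \<Sum>p'\<in>I. \<Sum>q'\<in>J. ?T p q p' q' x y x' y')"
    unfolding qform_def local_sandwich_def sum_cartesian
    by (simp only: prod.case mult_sum_nested4) (intro sum.cong refl, simp only: mult_ac)
  also have "\<dots> = (\<Sum>p\<in>I. \<Sum>q\<in>J. \<Sum>p'\<in>I. \<Sum>q'\<in>J.
      \<Sum>x\<in>I. \<Sum>y\<in>J. \<Sum>x'\<in>I. \<Sum>y'\<in>J. ?T p q p' q' x y x' y')"
    by (rule sum_nested4_swap[symmetric])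
  also have "\<dots> = qform I J X (\<lambda>(p, q). \<Sum>x\<in>I. \<Sum>y\<in>J. cnj (A x p) * cnj (B y q) * \<phi> (x, y))"
    unfolding qform_def sum_cartesian
    by (simp only: prod.case cnj_sum complex_cnj_mult complex_cnj_cnj sum_nested2_mult)
       (intro sum.cong refl, simp only: mult_ac)
  finally show ?thesis .
qed

lemma local_sandwich_monomial:
  assumes "finite I" "finite J" "\<sigma> x \<in> I" "\<sigma> x' \<in> I" "\<tau> y \<in> J" "\<tau> y' \<in> J"
  shows "local_sandwich I J (\<lambda>x p. \<alpha> x * (if p = \<sigma> x then 1 else 0))
      (\<lambda>y q. \<beta> y * (if q = \<tau> y then 1 else 0)) X (x, y) (x', y') =
    \<alpha> x * \<beta> y * X (\<sigma> x, \<tau> y) (\<sigma> x', \<tau> y') * cnj (\<alpha> x') * cnj (\<beta> y')"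
proof -
  let ?C = "\<alpha> x * \<beta> y * X (\<sigma> x, \<tau> y) (\<sigma> x', \<tau> y') * cnj (\<alpha> x') * cnj (\<beta> y')"
  have flat: "(\<Sum>p\<in>I. \<Sum>q\<in>J. \<Sum>p'\<in>I. \<Sum>q'\<in>J. g p q p' q') =
      (\<Sum>(p, q, p', q')\<in>I \<times> J \<times> I \<times> J. g p q p' q')" for g
    by (simp add: sum.cartesian_product[symmetric])
  have "local_sandwich I J (\<lambda>x p. \<alpha> x * (if p = \<sigma> x then 1 else 0))
      (\<lambda>y q. \<beta> y * (if q = \<tau> y then 1 else 0)) X (x, y) (x', y') =
    (\<Sum>z\<in>I \<times> J \<times> I \<times> J. if z = (\<sigma> x, \<tau> y, \<sigma> x', \<tau> y') then ?C else 0)"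
    unfolding local_sandwich_def prod.case flat
    by (intro sum.cong refl) (auto split: if_split_asm)
  also have "\<dots> = ?C"
    using assms by (simp add: sum.delta)
  finally show ?thesis .
qed

lemma schmidt_rank_le2_local_adjoint:
  assumes "schmidt_rank_le2 I J \<phi>"
  shows "schmidt_rank_le2 I J (\<lambda>(p, q). \<Sum>x\<in>I. \<Sum>y\<in>J. cnj (A x p) * cnj (B y q) * \<phi> (x, y))"
proof -
  obtain a1 a2 b1 b2 where ab: "\<forall>x\<in>I. \<forall>y\<in>J. \<phi> (x, y) = a1 x * b1 y + a2 x * b2 y"
    using assms unfolding schmidt_rank_le2_def by blast
  have "(\<Sum>x\<in>I. \<Sum>y\<in>J. cnj (A x p) * cnj (B y q) * \<phi> (x, y)) =
     (\<Sum>x\<in>I. cnj (A x p) * a1 x) * (\<Sum>y\<in>J. cnj (B y q) * b1 y) +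
     (\<Sum>x\<in>I. cnj (A x p) * a2 x) * (\<Sum>y\<in>J. cnj (B y q) * b2 y)" for p q
    using ab by (simp add: sum_product sum.distrib[symmetric] algebra_simps)
  then show ?thesis
    unfolding schmidt_rank_le2_def by (intro exI) auto
qed

lemma tensor_pow_local_sandwich:
  assumes "finite T"
  shows "(\<Prod>k<n. local_sandwich T T (A k) (B k) X (xs!k, ys!k) (xs'!k, ys'!k)) =
    local_sandwich (nlists n T) (nlists n T)
      (\<lambda>xs ps. \<Prod>k<n. A k (xs!k) (ps!k)) (\<lambda>ys qs. \<Prod>k<n. B k (ys!k) (qs!k))
      (tensor_pow X n) (xs, ys) (xs', ys')"
  unfolding local_sandwich_def tensor_pow_def
  by (simp add: prod_sum_nlists[OF assms] prod.distrib)

lemma tensor_pow_sum_local_sandwich: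
  fixes A B :: "'j \<Rightarrow> nat \<Rightarrow> nat \<Rightarrow> complex"
  assumes "finite Js" "finite T"
    and M: "\<And>u u'. u \<in> T \<times> T \<Longrightarrow> u' \<in> T \<times> T \<Longrightarrow>
      M u u' = (\<Sum>j\<in>Js. local_sandwich T T (A j) (B j) X u u')"
    and u: "u \<in> nlists n T \<times> nlists n T" "u' \<in> nlists n T \<times> nlists n T"
  shows "tensor_pow M n u u' = (\<Sum>js\<in>nlists n Js. local_sandwich (nlists n T) (nlists n T)
      (\<lambda>xs ps. \<Prod>k<n. A (js!k) (xs!k) (ps!k)) (\<lambda>ys qs. \<Prod>k<n. B (js!k) (ys!k) (qs!k))
      (tensor_pow X n) u u')"
proof -
  obtain xs ys xs' ys' where uu: "u = (xs, ys)" "u' = (xs', ys')"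
    by (cases u, cases u') auto
  have "tensor_pow M n u u' =
      (\<Prod>k<n. \<Sum>j\<in>Js. local_sandwich T T (A j) (B j) X (xs!k, ys!k) (xs'!k, ys'!k))"
    unfolding tensor_pow_def uu prod.case
    using u by (intro prod.cong refl M) (auto simp: uu nlistsE_nth_in)
  also have "\<dots> = (\<Sum>js\<in>nlists n Js.
      \<Prod>k<n. local_sandwich T T (A (js!k)) (B (js!k)) X (xs!k, ys!k) (xs'!k, ys'!k))"
    by (rule prod_sum_nlists[OF assms(1)])
  finally show ?thesis
    unfolding uu tensor_pow_local_sandwich[OF assms(2)] .
qed

text \<open>By qform_local_sandwich, <\<phi>|(A (x) B) X (A (x) B)^*|\<phi>> = <\<psi>|X|\<psi>> with
  \<psi> = (A (x) B)^* \<phi>, which again has Schmidt rank at most two.\<close>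
lemma qform_tensor_pow_local_sum_nonneg:
  fixes A B :: "'j \<Rightarrow> nat \<Rightarrow> nat \<Rightarrow> complex"
  assumes "finite Js" "finite T"
    and M: "\<And>u u'. u \<in> T \<times> T \<Longrightarrow> u' \<in> T \<times> T \<Longrightarrow>
      M u u' = (\<Sum>j\<in>Js. local_sandwich T T (A j) (B j) X u u')"
    and X: "\<And>\<psi>. schmidt_rank_le2 (nlists n T) (nlists n T) \<psi> \<Longrightarrow>
      cnonneg (qform (nlists n T) (nlists n T) (tensor_pow X n) \<psi>)"
    and \<phi>: "schmidt_rank_le2 (nlists n T) (nlists n T) \<phi>"
  shows "cnonneg (qform (nlists n T) (nlists n T) (tensor_pow M n) \<phi>)"
proof -
  let ?L = "nlists n T"
  have "qform ?L ?L (tensor_pow M n) \<phi> = (\<Sum>js\<in>nlists n Js. qform ?L ?L (local_sandwich ?L ?L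
      (\<lambda>xs ps. \<Prod>k<n. A (js!k) (xs!k) (ps!k)) (\<lambda>ys qs. \<Prod>k<n. B (js!k) (ys!k) (qs!k))
      (tensor_pow X n)) \<phi>)"
    by (subst qform_sum[symmetric], rule qform_cong)
       (auto intro: tensor_pow_sum_local_sandwich[OF assms(1,2) M])
  then show ?thesis
    by (simp only: qform_local_sandwich) (intro cnonneg_sum X schmidt_rank_le2_local_adjoint \<phi>)
qed

lemma qform_tensor_pow_psd:
  fixes v :: "'j \<Rightarrow> nat \<times> nat \<Rightarrow> complex"
  assumes "finite Js" "\<And>j. j \<in> Js \<Longrightarrow> 0 \<le> c j"
    and M: "\<And>u u'. u \<in> T \<times> T \<Longrightarrow> u' \<in> T \<times> T \<Longrightarrow>
      M u u' = (\<Sum>j\<in>Js. of_real (c j) * (v j u * cnj (v j u')))"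
  shows "cnonneg (qform (nlists n T) (nlists n T) (tensor_pow M n) \<psi>)"
proof -
  let ?L = "nlists n T"
  define V where "V js = (\<lambda>(xs, ys). \<Prod>k<n. v (js!k) (xs!k, ys!k))" for js
  define C where "C js = (\<Prod>k<n. c (js!k))" for js
  have "tensor_pow M n u u' = (\<Sum>js\<in>nlists n Js. of_real (C js) * (V js u * cnj (V js u')))"
    if "u \<in> ?L \<times> ?L" "u' \<in> ?L \<times> ?L" for u u'
  proof -
    obtain xs ys xs' ys' where uu: "u = (xs, ys)" "u' = (xs', ys')"
      by (cases u, cases u') auto
    have "tensor_pow M n u u' = (\<Prod>k<n. \<Sum>j\<in>Js.
        of_real (c j) * (v j (xs!k, ys!k) * cnj (v j (xs'!k, ys'!k))))"
      unfolding tensor_pow_def uu prod.case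
      using that by (intro prod.cong refl M) (auto simp: uu nlistsE_nth_in)
    also have "\<dots> = (\<Sum>js\<in>nlists n Js. of_real (C js) * (V js u * cnj (V js u')))"
      unfolding prod_sum_nlists[OF assms(1)] uu V_def C_def by (simp add: prod.distrib)
    finally show ?thesis .
  qed
  then have eq: "qform ?L ?L (tensor_pow M n) \<psi> =
      (\<Sum>js\<in>nlists n Js. of_real (C js * (cmod (\<Sum>u\<in>?L \<times> ?L. cnj (V js u) * \<psi> u))\<^sup>2))"
    by (subst qform_rank_one[symmetric], subst qform_sum[symmetric], intro qform_cong) auto
  have "0 \<le> C js" if "js \<in> nlists n Js" for js
    unfolding C_def using assms(2) that by (auto intro!: prod_nonneg simp: nlistsE_nth_in)
  then show ?thesis
    unfolding eq by (intro cnonneg_sum cnonneg_of_real mult_nonneg_nonneg) auto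
qed

lemma sum_swap_outer_inner:
  "(\<Sum>y\<in>J. \<Sum>x\<in>I. \<Sum>y'\<in>J. f y x y') = (\<Sum>y\<in>J. \<Sum>x\<in>I. \<Sum>y'\<in>J. f y' x y)"
proof -
  have "(\<Sum>y\<in>J. \<Sum>x\<in>I. \<Sum>y'\<in>J. f y' x y) = (\<Sum>y\<in>J. \<Sum>y'\<in>J. \<Sum>x\<in>I. f y' x y)"
    by (intro sum.cong refl sum.swap)
  also have "\<dots> = (\<Sum>y'\<in>J. \<Sum>y\<in>J. \<Sum>x\<in>I. f y' x y)"
    by (rule sum.swap)
  also have "\<dots> = (\<Sum>y\<in>J. \<Sum>x\<in>I. \<Sum>y'\<in>J. f y x y')"
    by (intro sum.cong refl sum.swap)
  finally show ?thesis ..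
qed

lemma qform_partial_transpose_product:
  "qform I J (partial_transpose R) (\<lambda>(x, y). a x * b y) = qform I J R (\<lambda>(x, y). a x * cnj (b y))"
proof -
  have "qform I J (partial_transpose R) (\<lambda>(x, y). a x * b y) =
      (\<Sum>x\<in>I. \<Sum>y\<in>J. \<Sum>x'\<in>I. \<Sum>y'\<in>J. cnj (a x) * cnj (b y) * R (x, y') (x', y) * a x' * b y')"
    unfolding qform_def partial_transpose_def sum_cartesian by (simp add: mult_ac)
  also have "\<dots> = (\<Sum>x\<in>I. \<Sum>y\<in>J. \<Sum>x'\<in>I. \<Sum>y'\<in>J. cnj (a x) * cnj (b y') * R (x, y) (x', y') * a x' * b y)"
    by (intro sum.cong refl sum_swap_outer_inner)
  also have "\<dots> = qform I J R (\<lambda>(x, y). a x * cnj (b y))"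
    unfolding qform_def sum_cartesian by (simp add: mult_ac)
  finally show ?thesis .
qed

lemma lin_dependent_sum_product:
  assumes "\<not> lin_indep2 I a1 a2"
  shows "\<exists>a b. \<forall>x\<in>I. \<forall>y. a1 x * b1 y + a2 x * b2 y = a x * b y"
proof -
  obtain \<alpha> \<beta> where dep: "\<forall>x\<in>I. \<alpha> * a1 x + \<beta> * a2 x = 0" and nz: "\<alpha> \<noteq> 0 \<or> \<beta> \<noteq> 0"
    using assms unfolding lin_indep2_def by blast
  show ?thesis
  proof (cases "\<beta> = 0")
    case True
    then have "\<forall>x\<in>I. a1 x = 0"
      using dep nz by auto
    then show ?thesis
      by auto
  next
    case False
    then have "\<forall>x\<in>I. a2 x = - (\<alpha> / \<beta>) * a1 x"
      using dep by (auto simp: field_simps add_eq_0_iff)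
    then have "\<forall>x\<in>I. \<forall>y. a1 x * b1 y + a2 x * b2 y = a1 x * (b1 y - (\<alpha> / \<beta>) * b2 y)"
      by (simp add: algebra_simps)
    then show ?thesis
      by (intro exI[of _ a1] exI[of _ "\<lambda>y. b1 y - \<alpha> / \<beta> * b2 y"])
  qed
qed

lemma schmidt_rank_le2_cases:
  assumes "schmidt_rank_le2 I J \<phi>"
  obtains "schmidt_rank_two I J \<phi>" | a b where "\<forall>x\<in>I. \<forall>y\<in>J. \<phi> (x, y) = a x * b y"
proof -
  obtain a1 a2 b1 b2 where \<phi>: "\<forall>x\<in>I. \<forall>y\<in>J. \<phi> (x, y) = a1 x * b1 y + a2 x * b2 y"
    using assms unfolding schmidt_rank_le2_def by blast
  consider "lin_indep2 I a1 a2 \<and> lin_indep2 J b1 b2" | "\<not> lin_indep2 I a1 a2" | "\<not> lin_indep2 J b1 b2"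
    by blast
  then show thesis
  proof cases
    case 1
    then show thesis
      using \<phi> that(1) unfolding schmidt_rank_two_def by blast
  next
    case 2
    then obtain a b where "\<forall>x\<in>I. \<forall>y. a1 x * b1 y + a2 x * b2 y = a x * b y"
      using lin_dependent_sum_product by blast
    then show thesis
      using \<phi> that(2)[of a b] by auto
  next
    case 3
    then obtain b a where "\<forall>y\<in>J. \<forall>x. b1 y * a1 x + b2 y * a2 x = b y * a x"
      using lin_dependent_sum_product by blast
    then show thesis
      using \<phi> that(2)[of a b] by (auto simp: mult.commute)
  qed
qed

text \<open>On product vectors the partial transpose only conjugates the B factor, so there positivity
  of R itself suffices.\<close>
lemma pseudo_one_copy_undist_schmidt_rank_le2:
  assumes "pseudo_one_copy_undist I J R"
    and psd: "\<And>\<psi>. cnonneg (qform I J R \<psi>)"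
    and "schmidt_rank_le2 I J \<phi>"
  shows "cnonneg (qform I J (partial_transpose R) \<phi>)"
  using assms(3)
proof (cases rule: schmidt_rank_le2_cases)
  case 1
  then show ?thesis
    using assms(1) unfolding pseudo_one_copy_undist_def by blast
next
  case (2 a b)
  then have "qform I J (partial_transpose R) \<phi> = qform I J (partial_transpose R) (\<lambda>(x, y). a x * b y)"
    by (intro qform_cong) auto
  then show ?thesis
    using psd by (simp add: qform_partial_transpose_product)
qed

section \<open>The states rho_bc and their partial transposes\<close>

definition pt_pattern :: "real \<Rightarrow> real \<Rightarrow> real \<Rightarrow> nat \<times> nat \<Rightarrow> nat \<times> nat \<Rightarrow> complex" where
  "pt_pattern \<alpha> \<beta> \<gamma> = (\<lambda>(x, y) (x', y'). of_real
     (if x = y \<and> x' = y' then (if x = x' then \<alpha> else \<gamma>) else if x = x' \<and> y = y' then \<beta> else 0))"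

lemma pt_pattern_lincomb:
  "of_real v * pt_pattern \<alpha>1 \<beta>1 \<gamma>1 u u' + of_real p * pt_pattern \<alpha>2 \<beta>2 \<gamma>2 u u' +
     of_real q * pt_pattern \<alpha>3 \<beta>3 \<gamma>3 u u' =
   pt_pattern (v * \<alpha>1 + p * \<alpha>2 + q * \<alpha>3) (v * \<beta>1 + p * \<beta>2 + q * \<beta>3) (v * \<gamma>1 + p * \<gamma>2 + q * \<gamma>3) u u'"
  by (cases u; cases u') (auto simp: pt_pattern_def)

lemma finite_pairs_lt: "finite (pairs_lt d)"
  by (rule finite_subset[of _ "{..<d} \<times> {..<d}"]) (auto simp: pairs_lt_def)

lemma ket2_eq: "ket2 i j u = (if u = (i, j) then 1 else 0)"
  by (cases u) (auto simp: ket2_def)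

lemma cnj_ket2: "cnj (ket2 i j u) = ket2 i j u"
  by (simp add: ket2_eq)

lemma proj_psi:
  "proj (psi s i j) u u' = (ket2 i j u + s * ket2 j i u) * (ket2 i j u' + cnj s * ket2 j i u') / 2"
proof -
  let ?r = "complex_of_real (sqrt 2)"
  have "?r * ?r = 2"
    by (simp flip: of_real_mult)
  then have "(z / ?r) * (z' / ?r) = z * z' / 2" for z z'
    by (simp flip: \<open>?r * ?r = 2\<close>)
  then show ?thesis
    unfolding proj_def psi_def by (simp add: cnj_ket2)
qed

lemma sum_pairs_lt_indicator:
  "(\<Sum>p\<in>pairs_lt d. (if p = a then 1 else 0) * (if p = b then 1 else 0)) =
   (if a \<in> pairs_lt d \<and> a = b then 1 else (0::complex))"
proof -
  have "(\<Sum>p\<in>pairs_lt d. (if p = a then 1 else 0) * (if p = b then 1 else (0::complex))) =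
      (\<Sum>p\<in>pairs_lt d. if p = a then (if a = b then 1 else 0) else 0)"
    by (intro sum.cong refl) auto
  then show ?thesis
    using finite_pairs_lt by (auto simp: sum.delta)
qed

lemma sum_proj_psi:
  "(\<Sum>(i, j)\<in>pairs_lt d. proj (psi s i j) (x, y) (x', y')) =
    ((if (x, y) \<in> pairs_lt d \<and> (x, y) = (x', y') then 1 else 0)
    + cnj s * (if (x, y) \<in> pairs_lt d \<and> (x, y) = (y', x') then 1 else 0)
    + s * (if (y, x) \<in> pairs_lt d \<and> (y, x) = (x', y') then 1 else 0)
    + s * cnj s * (if (y, x) \<in> pairs_lt d \<and> (y, x) = (y', x') then 1 else 0)) / 2"
proof -
  let ?I = "\<lambda>p a. if p = a then 1 else (0::complex)"
  have "(\<Sum>(i, j)\<in>pairs_lt d. proj (psi s i j) (x, y) (x', y')) =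
    (\<Sum>p\<in>pairs_lt d. (?I p (x, y) + s * ?I p (y, x)) * (?I p (x', y') + cnj s * ?I p (y', x')) / 2)"
  proof (intro sum.cong refl)
    fix p assume "p \<in> pairs_lt d"
    obtain i j where p: "p = (i, j)"
      by (cases p)
    have "ket2 i j u = ?I p u" "ket2 j i u = ?I p (snd u, fst u)" for u
      by (auto simp: p ket2_def split: prod.split)
    then show "(case p of (i, j) \<Rightarrow> proj (psi s i j) (x, y) (x', y')) =
        (?I p (x, y) + s * ?I p (y, x)) * (?I p (x', y') + cnj s * ?I p (y', x')) / 2"
      unfolding p prod.case proj_psi by simp
  qed
  also have "\<dots> = ((\<Sum>p\<in>pairs_lt d. ?I p (x, y) * ?I p (x', y'))
      + cnj s * (\<Sum>p\<in>pairs_lt d. ?I p (x, y) * ?I p (y', x'))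
      + s * (\<Sum>p\<in>pairs_lt d. ?I p (y, x) * ?I p (x', y'))
      + s * cnj s * (\<Sum>p\<in>pairs_lt d. ?I p (y, x) * ?I p (y', x'))) / 2"
    by (simp only: sum_divide_distrib[symmetric] sum_distrib_left sum.distrib[symmetric] algebra_simps)
  finally show ?thesis
    unfolding sum_pairs_lt_indicator .
qed

lemma sum_proj_diag:
  "(\<Sum>i<d. proj (ket2 i i) (x, y) (x', y')) = (if x = y \<and> x' = y' \<and> x = x' \<and> x < d then 1 else 0)"
proof -
  have "(\<Sum>i<d. proj (ket2 i i) (x, y) (x', y')) =
      (\<Sum>i<d. if i = x then (if x = y \<and> x' = y' \<and> x = x' then 1 else 0) else 0)"
    by (intro sum.cong refl) (auto simp: proj_def ket2_def)
  then show ?thesis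
    by (simp add: sum.delta)
qed

lemma partial_transpose_rho_bc:
  assumes "x < d" "y < d" "x' < d" "y' < d"
  shows "partial_transpose (rho_bc d b c) (x, y) (x', y') =
    pt_pattern (coef_a d b c) ((b + c) / 2) ((c - b) / 2) (x, y) (x', y')"
  unfolding partial_transpose_def rho_bc_def prod.case sum_proj_diag sum_proj_psi pt_pattern_def
  using assms by (auto simp: pairs_lt_def field_simps)

lemma rho_bc_tensor_pow_psd:
  assumes "0 \<le> coef_a d b c" "0 \<le> b" "0 \<le> c"
  shows "cnonneg (qform (idx d n) (idx d n) (tensor_pow (rho_bc d b c) n) \<psi>)"
proof -
  let ?Js = "{..<d} <+> pairs_lt d <+> pairs_lt d"
  define weight where "weight j = (case j of Inl _ \<Rightarrow> coef_a d b c | Inr (Inl _) \<Rightarrow> b | Inr (Inr _) \<Rightarrow> c)"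
    for j :: "nat + (nat \<times> nat) + (nat \<times> nat)"
  define vec where "vec j = (case j of Inl i \<Rightarrow> ket2 i i
      | Inr (Inl (i, k)) \<Rightarrow> psi (-1) i k | Inr (Inr (i, k)) \<Rightarrow> psi 1 i k)"
    for j :: "nat + (nat \<times> nat) + (nat \<times> nat)"
  have "rho_bc d b c u u' = (\<Sum>j\<in>?Js. of_real (weight j) * (vec j u * cnj (vec j u')))" for u u'
    unfolding rho_bc_def weight_def vec_def
    by (simp add: sum.Plus finite_pairs_lt sum_distrib_left proj_def split_def)
  then show ?thesis
    unfolding idx_eq_nlists
    by (intro qform_tensor_pow_psd[where Js = ?Js and c = weight])
       (use assms finite_pairs_lt in \<open>auto simp: weight_def split: sum.splits\<close>)
qed

lemma rho_bc_G_tensor_pow_psd: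
  assumes "2 \<le> d"
  shows "cnonneg (qform (idx d n) (idx d n)
    (tensor_pow (rho_bc d (3 / (real d * (2 * real d - 1))) (1 / (real d * (2 * real d - 1)))) n) \<psi>)"
proof (rule rho_bc_tensor_pow_psd)
  define D where "D = real d"
  have D: "D > 0" "D - 1 > 0" "2 * D - 1 > 0"
    using assms by (auto simp: D_def)
  have "(3 / (D * (2 * D - 1)) + 1 / (D * (2 * D - 1))) * (D * (D - 1) / 2) = 2 * (D - 1) / (2 * D - 1)"
    using D by (simp add: field_simps)
  then show "0 \<le> coef_a d (3 / (real d * (2 * real d - 1))) (1 / (real d * (2 * real d - 1)))"
    unfolding coef_a_def D_def[symmetric] using D by (simp add: field_simps)
qed (use assms in auto)

section \<open>Phase-averaged product projectors\<close>

definition distinct_pairs :: "nat \<Rightarrow> (nat \<times> nat) set" where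
  "distinct_pairs d = {(i, j). i < d \<and> j < d \<and> i \<noteq> j}"

lemma distinct_pairs_Sigma: "distinct_pairs d = Sigma {..<d} (\<lambda>i. {..<d} - {i})"
  by (auto simp: distinct_pairs_def)

lemma finite_distinct_pairs: "finite (distinct_pairs d)"
  unfolding distinct_pairs_Sigma by auto

lemma sum_distinct_pairs_delta:
  "(\<Sum>p\<in>distinct_pairs d. if p = a \<and> P then 1 else 0) = (if a \<in> distinct_pairs d \<and> P then 1 else (0::complex))"
proof -
  have "(\<Sum>p\<in>distinct_pairs d. if p = a \<and> P then 1 else 0) =
      (\<Sum>p\<in>distinct_pairs d. if p = a then (if P then 1 else 0) else (0::complex))"
    by (intro sum.cong) auto
  then show ?thesis
    using finite_distinct_pairs by (simp add: sum.delta)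
qed

lemma sum_distinct_pairs_fst:
  assumes "x < d"
  shows "(\<Sum>p\<in>distinct_pairs d. if fst p = x \<and> P then 1 else 0) = (if P then of_nat d - 1 else (0::complex))"
proof -
  have "(\<Sum>p\<in>distinct_pairs d. if fst p = x \<and> P then 1 else 0) =
      (\<Sum>i<d. \<Sum>j\<in>{..<d} - {i}. if i = x \<and> P then 1 else (0::complex))"
    unfolding distinct_pairs_Sigma by (subst sum.Sigma) (simp_all add: split_def)
  also have "\<dots> = (\<Sum>i<d. if i = x then (if P then of_nat (card ({..<d} - {i})) else 0) else 0)"
    by (intro sum.cong) auto
  also have "\<dots> = (if P then of_nat d - 1 else 0)"
    using assms by (simp add: sum.delta card_Diff_singleton of_nat_diff)
  finally show ?thesis .
qed

lemma sum_distinct_pairs_snd: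
  assumes "x < d"
  shows "(\<Sum>p\<in>distinct_pairs d. if snd p = x \<and> P then 1 else 0) = (if P then of_nat d - 1 else (0::complex))"
proof -
  have "(\<Sum>p\<in>distinct_pairs d. if snd p = x \<and> P then 1 else (0::complex)) =
      (\<Sum>p\<in>distinct_pairs d. if fst p = x \<and> P then 1 else 0)"
    by (rule sum.reindex_bij_witness[of _ prod.swap prod.swap]) (auto simp: distinct_pairs_def)
  then show ?thesis
    using sum_distinct_pairs_fst[OF assms] by simp
qed

definition twirl_a :: "nat \<Rightarrow> nat \<Rightarrow> nat \<Rightarrow> nat \<Rightarrow> complex" where
  "twirl_a i j s x = (if x = i then 1 else if x = j then \<i> ^ s else 0)"

definition twirl_b :: "nat \<Rightarrow> nat \<Rightarrow> nat \<Rightarrow> nat \<Rightarrow> complex" where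
  "twirl_b i j s y = (if y = i then 1 else if y = j then - ((- \<i>) ^ s) else 0)"

text \<open>For p = (i, j) this is the entry at (xy, x'y') of
  |ii><ii| + |jj><jj| + |ij><ij| + |ji><ji| - |ii><jj| - |jj><ii|.\<close>
definition twirl_average :: "nat \<Rightarrow> nat \<Rightarrow> nat \<Rightarrow> nat \<Rightarrow> nat \<times> nat \<Rightarrow> complex" where
  "twirl_average x y x' y' p =
     (if fst p = x \<and> x = y \<and> x = x' \<and> x = y' then 1 else 0)
   + (if snd p = x \<and> x = y \<and> x = x' \<and> x = y' then 1 else 0)
   + (if p = (x, y) \<and> x' = x \<and> y' = y then 1 else 0)
   + (if p = (y, x) \<and> x' = x \<and> y' = y then 1 else 0)
   - (if p = (x, x') \<and> x = y \<and> x' = y' then 1 else 0)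
   - (if p = (x', x) \<and> x = y \<and> x' = y' then 1 else 0)"

text \<open>Summing over the four phases kills every cross term of the product projectors except
  the one between |ii> and |jj>.\<close>
lemma sum_phases_twirl:
  assumes "i \<noteq> j"
  shows "(\<Sum>s<4. twirl_a i j s x * twirl_b i j s y * cnj (twirl_a i j s x') * cnj (twirl_b i j s y')) =
    4 * twirl_average x y x' y' (i, j)"
  unfolding twirl_a_def twirl_b_def twirl_average_def using assms
  by (auto simp: eval_nat_numeral)

lemma sum_twirl_products:
  assumes "x < d" "y < d" "x' < d" "y' < d"
  shows "(\<Sum>((i, j), s)\<in>distinct_pairs d \<times> {..<4}.
      twirl_a i j s x * twirl_b i j s y * cnj (twirl_a i j s x') * cnj (twirl_b i j s y')) =
    8 * pt_pattern (real d - 1) 1 (-1) (x, y) (x', y')"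
proof -
  have "(\<Sum>p\<in>distinct_pairs d. twirl_average x y x' y' p) = 2 * pt_pattern (real d - 1) 1 (-1) (x, y) (x', y')"
    unfolding twirl_average_def sum.distrib sum_subtractf sum_distinct_pairs_delta
      sum_distinct_pairs_fst[OF assms(1)] sum_distinct_pairs_snd[OF assms(1)]
    using assms by (auto simp: pt_pattern_def distinct_pairs_def)
  moreover have "(\<Sum>((i, j), s)\<in>distinct_pairs d \<times> {..<4}.
      twirl_a i j s x * twirl_b i j s y * cnj (twirl_a i j s x') * cnj (twirl_b i j s y')) =
    (\<Sum>p\<in>distinct_pairs d. 4 * twirl_average x y x' y' p)"
    unfolding sum.cartesian_product[symmetric]
    by (intro sum.cong refl) (auto simp: distinct_pairs_def sum_phases_twirl)
  ultimately show ?thesis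
    by (simp add: sum_distrib_left[symmetric])
qed

lemma sum_offdiagonal_products:
  assumes "x < d" "y < d"
  shows "(\<Sum>(i, j)\<in>distinct_pairs d. (if x = i then 1 else 0) * (if y = j then 1 else 0) *
      (if x' = i then 1 else 0) * (if y' = j then 1 else (0::complex))) =
    pt_pattern 0 1 0 (x, y) (x', y')"
proof -
  have "(\<Sum>(i, j)\<in>distinct_pairs d. (if x = i then 1 else 0) * (if y = j then 1 else 0) *
      (if x' = i then 1 else 0) * (if y' = j then 1 else (0::complex))) =
    (\<Sum>p\<in>distinct_pairs d. if p = (x, y) \<and> x' = x \<and> y' = y then 1 else 0)"
    by (intro sum.cong refl) (auto split: if_split_asm)
  then show ?thesis
    unfolding sum_distinct_pairs_delta using assms by (auto simp: pt_pattern_def distinct_pairs_def)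
qed

section \<open>Local decomposition over the triangle BGK\<close>

lemma local_sandwich_scaled_id:
  assumes "finite I" "finite J" "x \<in> I" "x' \<in> I" "y \<in> J" "y' \<in> J"
  shows "local_sandwich I J (\<lambda>x p. of_real k * (if p = x then 1 else 0))
      (\<lambda>y q. if q = y then 1 else 0) X (x, y) (x', y') = of_real (k\<^sup>2) * X (x, y) (x', y')"
  using local_sandwich_monomial[where \<sigma> = id and \<tau> = id and \<alpha> = "\<lambda>_. of_real k" and \<beta> = "\<lambda>_. 1",
      OF assms(1,2)] assms(3-)
  by (simp add: power2_eq_square)

lemma local_sandwich_rank_one:
  assumes "finite I" "finite J" "p0 \<in> I" "q0 \<in> J"
  shows "local_sandwich I J (\<lambda>x p. a x * (if p = p0 then 1 else 0))
      (\<lambda>y q. b y * (if q = q0 then 1 else 0)) X (x, y) (x', y') =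
    X (p0, q0) (p0, q0) * (a x * b y * cnj (a x') * cnj (b y'))"
  using local_sandwich_monomial[where \<sigma> = "\<lambda>_. p0" and \<tau> = "\<lambda>_. q0", OF assms(1,2)] assms(3,4)
  by (simp add: mult_ac)

text \<open>The rank-one local operators |a><0| and |b><1| turn X into X(01, 01) |a><a| (x) |b><b|.\<close>
lemma sum_local_sandwich_twirl:
  assumes "2 \<le> d" and X01: "X (0, 1) (0, 1) = of_real t"
    and xy: "x < d" "y < d" "x' < d" "y' < d"
  shows "(\<Sum>((i, i'), s)\<in>distinct_pairs d \<times> {..<4}. local_sandwich {..<d} {..<d}
      (\<lambda>x p. of_real k * twirl_a i i' s x * (if p = 0 then 1 else 0))
      (\<lambda>y q. twirl_b i i' s y * (if q = 1 then 1 else 0)) X (x, y) (x', y')) =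
    of_real (8 * k\<^sup>2 * t) * pt_pattern (real d - 1) 1 (-1) (x, y) (x', y')"
proof -
  have d: "0 \<in> {..<d}" "1 \<in> {..<d}"
    using assms(1) by auto
  have "local_sandwich {..<d} {..<d} (\<lambda>x p. of_real k * twirl_a i i' s x * (if p = 0 then 1 else 0))
      (\<lambda>y q. twirl_b i i' s y * (if q = 1 then 1 else 0)) X (x, y) (x', y') = of_real (k\<^sup>2 * t) *
    (twirl_a i i' s x * twirl_b i i' s y * cnj (twirl_a i i' s x') * cnj (twirl_b i i' s y'))" for i i' s
    by (subst local_sandwich_rank_one[OF _ _ d]) (simp_all add: X01[simplified] power2_eq_square)
  then have "(\<Sum>((i, i'), s)\<in>distinct_pairs d \<times> {..<4}. local_sandwich {..<d} {..<d}
      (\<lambda>x p. of_real k * twirl_a i i' s x * (if p = 0 then 1 else 0))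
      (\<lambda>y q. twirl_b i i' s y * (if q = 1 then 1 else 0)) X (x, y) (x', y')) =
    of_real (k\<^sup>2 * t) * (\<Sum>((i, i'), s)\<in>distinct_pairs d \<times> {..<4}.
      twirl_a i i' s x * twirl_b i i' s y * cnj (twirl_a i i' s x') * cnj (twirl_b i i' s y'))"
    unfolding sum_distrib_left by (intro sum.cong refl) (simp add: split_paired_all)
  also have "\<dots> = of_real (8 * k\<^sup>2 * t) * pt_pattern (real d - 1) 1 (-1) (x, y) (x', y')"
    unfolding sum_twirl_products[OF xy] by simp
  finally show ?thesis .
qed

lemma sum_local_sandwich_offdiagonal:
  assumes "2 \<le> d" and X01: "X (0, 1) (0, 1) = of_real t" and xy: "x < d" "y < d"
  shows "(\<Sum>(i, i')\<in>distinct_pairs d. local_sandwich {..<d} {..<d}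
      (\<lambda>x p. of_real k * (if x = i then 1 else 0) * (if p = 0 then 1 else 0))
      (\<lambda>y q. (if y = i' then 1 else 0) * (if q = 1 then 1 else 0)) X (x, y) (x', y')) =
    of_real (k\<^sup>2 * t) * pt_pattern 0 1 0 (x, y) (x', y')"
proof -
  let ?\<delta> = "\<lambda>a b. if a = b then 1 else (0::complex)"
  have d: "0 \<in> {..<d}" "1 \<in> {..<d}"
    using assms(1) by auto
  have "local_sandwich {..<d} {..<d} (\<lambda>x p. of_real k * ?\<delta> x i * ?\<delta> p 0) (\<lambda>y q. ?\<delta> y i' * ?\<delta> q 1)
      X (x, y) (x', y') = of_real (k\<^sup>2 * t) * (?\<delta> x i * ?\<delta> y i' * ?\<delta> x' i * ?\<delta> y' i')" for i i'
    by (subst local_sandwich_rank_one[OF _ _ d]) (simp_all add: X01[simplified] power2_eq_square)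
  then have "(\<Sum>(i, i')\<in>distinct_pairs d. local_sandwich {..<d} {..<d}
      (\<lambda>x p. of_real k * ?\<delta> x i * ?\<delta> p 0) (\<lambda>y q. ?\<delta> y i' * ?\<delta> q 1) X (x, y) (x', y')) =
    of_real (k\<^sup>2 * t) * (\<Sum>(i, i')\<in>distinct_pairs d. ?\<delta> x i * ?\<delta> y i' * ?\<delta> x' i * ?\<delta> y' i')"
    unfolding sum_distrib_left by (intro sum.cong refl) (simp add: split_paired_all)
  then show ?thesis
    unfolding sum_offdiagonal_products[OF xy] .
qed

lemma pt_pattern_local_decomposition:
  assumes "2 \<le> d" "0 \<le> v" "0 \<le> p" "0 \<le> q" "0 < t" and X01: "X (0, 1) (0, 1) = of_real t"
    and M: "\<And>x y x' y'. x < d \<Longrightarrow> y < d \<Longrightarrow> x' < d \<Longrightarrow> y' < d \<Longrightarrow> M (x, y) (x', y') =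
      of_real v * X (x, y) (x', y') + of_real p * pt_pattern (real d - 1) 1 (-1) (x, y) (x', y') +
      of_real q * pt_pattern 0 1 0 (x, y) (x', y')"
  shows "\<exists>Js :: (unit + ((nat \<times> nat) \<times> nat + nat \<times> nat)) set. \<exists>A B. finite Js \<and>
    (\<forall>z\<in>{..<d} \<times> {..<d}. \<forall>z'\<in>{..<d} \<times> {..<d}.
      M z z' = (\<Sum>j\<in>Js. local_sandwich {..<d} {..<d} (A j) (B j) X z z'))"
proof -
  let ?Js = "UNIV <+> (distinct_pairs d \<times> {..<4} <+> distinct_pairs d)
    :: (unit + ((nat \<times> nat) \<times> nat + nat \<times> nat)) set"
  let ?\<delta> = "\<lambda>a b. if a = b then 1 else (0::complex)"
  define kE where "kE = sqrt (p / (8 * t))"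
  define kN where "kN = sqrt (q / t)"
  have kE: "8 * kE\<^sup>2 * t = p" and kN: "kN\<^sup>2 * t = q"
    unfolding kE_def kN_def using assms(3-5) by simp_all
  define A where "A j = (case j of
      Inl _ \<Rightarrow> (\<lambda>x p. of_real (sqrt v) * ?\<delta> p x)
    | Inr (Inl ((i, i'), s)) \<Rightarrow> (\<lambda>x p. of_real kE * twirl_a i i' s x * ?\<delta> p 0)
    | Inr (Inr (i, i')) \<Rightarrow> (\<lambda>x p. of_real kN * ?\<delta> x i * ?\<delta> p 0))"
    for j :: "unit + ((nat \<times> nat) \<times> nat + nat \<times> nat)"
  define B where "B j = (case j of
      Inl _ \<Rightarrow> (\<lambda>y q. ?\<delta> q y)
    | Inr (Inl ((i, i'), s)) \<Rightarrow> (\<lambda>y q. twirl_b i i' s y * ?\<delta> q 1)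
    | Inr (Inr (i, i')) \<Rightarrow> (\<lambda>y q. ?\<delta> y i' * ?\<delta> q 1))"
    for j :: "unit + ((nat \<times> nat) \<times> nat + nat \<times> nat)"
  have "M (x, y) (x', y') = (\<Sum>j\<in>?Js. local_sandwich {..<d} {..<d} (A j) (B j) X (x, y) (x', y'))"
    if xy: "x < d" "y < d" "x' < d" "y' < d" for x y x' y'
  proof -
    have "(\<Sum>j\<in>UNIV. local_sandwich {..<d} {..<d} (A (Inl j)) (B (Inl j)) X (x, y) (x', y')) =
        of_real v * X (x, y) (x', y')"
      unfolding A_def B_def using xy assms(2) by (simp add: local_sandwich_scaled_id)
    moreover have "(\<Sum>j\<in>distinct_pairs d \<times> {..<4}.
        local_sandwich {..<d} {..<d} (A (Inr (Inl j))) (B (Inr (Inl j))) X (x, y) (x', y')) =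
      of_real p * pt_pattern (real d - 1) 1 (-1) (x, y) (x', y')"
      unfolding kE[symmetric] sum_local_sandwich_twirl[where X = X, OF assms(1) X01 xy, symmetric]
      by (intro sum.cong refl) (clarsimp simp: A_def B_def)
    moreover have "(\<Sum>j\<in>distinct_pairs d.
        local_sandwich {..<d} {..<d} (A (Inr (Inr j))) (B (Inr (Inr j))) X (x, y) (x', y')) =
      of_real q * pt_pattern 0 1 0 (x, y) (x', y')"
      unfolding kN[symmetric] sum_local_sandwich_offdiagonal[where X = X, OF assms(1) X01 xy(1,2), symmetric]
      by (intro sum.cong refl) (clarsimp simp: A_def B_def)
    ultimately show ?thesis
      using M[OF xy] by (simp add: sum.Plus finite_distinct_pairs comp_def)
  qed
  moreover have "finite ?Js"
    using finite_distinct_pairs by simp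
  ultimately show ?thesis
    by (intro exI[of _ ?Js] exI[of _ A] exI[of _ B]) auto
qed

lemma partial_transpose_rho_bc_triangle:
  fixes d :: nat and bK bG cG u v w :: real
  assumes "2 \<le> d" and bK_def: "bK = 1 / (real d * (real d - 1))"
    and bG_def: "bG = 3 / (real d * (2 * real d - 1))" and cG_def: "cG = 1 / (real d * (2 * real d - 1))"
    and uvw: "u + v + w = 1" and b: "b = u * bK + v * bG + w * bK" and c: "c = v * cG + w * bK"
    and xy: "x < d" "y < d" "x' < d" "y' < d"
  shows "partial_transpose (rho_bc d b c) (x, y) (x', y') =
    of_real v * partial_transpose (rho_bc d bG cG) (x, y) (x', y') +
    of_real (u * bK / 2) * pt_pattern (real d - 1) 1 (-1) (x, y) (x', y') +
    of_real (w * bK) * pt_pattern 0 1 0 (x, y) (x', y')"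
proof -
  define D where "D = real d"
  define K where "K = D * (D - 1) / 2"
  define r where "r = 2 * (D - 1) / (2 * D - 1)"
  have D: "D \<noteq> 0" "D - 1 \<noteq> 0" "2 * D - 1 \<noteq> 0"
    using assms(1) by (auto simp: D_def)
  have bK: "bK * K = 1 / 2" and bKD: "bK * (D - 1) = 1 / D"
    unfolding bK_def K_def D_def[symmetric] using D by (simp_all add: field_simps)
  have "u * bK / 2 * (D - 1) = u / 2 * (bK * (D - 1))"
    by simp
  then have bK': "u * bK / 2 * (D - 1) = u / (2 * D)"
    unfolding bKD by simp
  have G: "(bG + cG) * K = r"
    unfolding bG_def cG_def K_def r_def D_def[symmetric] using D by (simp add: field_simps)
  have w: "w = 1 - u - v"
    using uvw by simp
  have bc: "(b + c) * K = (u + 2 * w) * (bK * K) + v * ((bG + cG) * K)"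
    using b c by (simp add: algebra_simps)
  have "coef_a d b c = v * coef_a d bG cG + u * bK / 2 * (real d - 1) + w * bK * 0"
    unfolding coef_a_def D_def[symmetric] K_def[symmetric] bc bK G bK' w
    using D by (simp add: field_simps)
  moreover have "(b + c) / 2 = v * ((bG + cG) / 2) + u * bK / 2 * 1 + w * bK * 1"
    and "(c - b) / 2 = v * ((cG - bG) / 2) + u * bK / 2 * (-1) + w * bK * 0"
    using b c by (simp_all add: field_simps)
  ultimately show ?thesis
    unfolding partial_transpose_rho_bc[OF xy] pt_pattern_lincomb by (simp only:)
qed

lemma rho_bc_triangle_local_decomposition:
  fixes d :: nat and bK bG cG u v w :: real
  assumes "2 \<le> d" and bK_def: "bK = 1 / (real d * (real d - 1))"
    and bG_def: "bG = 3 / (real d * (2 * real d - 1))" and cG_def: "cG = 1 / (real d * (2 * real d - 1))"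
    and "0 \<le> u" "0 \<le> v" "0 \<le> w" "u + v + w = 1"
    and "b = u * bK + v * bG + w * bK" "c = v * cG + w * bK"
  shows "\<exists>Js :: (unit + ((nat \<times> nat) \<times> nat + nat \<times> nat)) set. \<exists>A B. finite Js \<and>
    (\<forall>z\<in>{..<d} \<times> {..<d}. \<forall>z'\<in>{..<d} \<times> {..<d}. partial_transpose (rho_bc d b c) z z' =
      (\<Sum>j\<in>Js. local_sandwich {..<d} {..<d} (A j) (B j) (partial_transpose (rho_bc d bG cG)) z z'))"
proof (rule pt_pattern_local_decomposition[where v = v and p = "u * bK / 2" and q = "w * bK"
      and t = "(bG + cG) / 2"])
  have "0 < bK" "0 < bG" "0 < cG"
    using assms(1) unfolding bK_def bG_def cG_def by auto
  then show "0 \<le> u * bK / 2" "0 \<le> w * bK" "0 < (bG + cG) / 2"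
    using assms(5,7) by simp_all
  show "partial_transpose (rho_bc d bG cG) (0, 1) (0, 1) = of_real ((bG + cG) / 2)"
    using partial_transpose_rho_bc[of 0 d 1 0 1] assms(1) by (simp add: pt_pattern_def)
qed (fact assms partial_transpose_rho_bc_triangle[OF assms(1-4,8-10)])+

lemma partial_transpose_tensor_pow:
  "partial_transpose (tensor_pow \<rho> n) = tensor_pow (partial_transpose \<rho>) n"
  by (auto simp: partial_transpose_def tensor_pow_def fun_eq_iff)

lemma pseudo_n_copy_undist_local_transfer:
  assumes undist: "pseudo_n_copy_undist d n \<rho>"
    and psd: "\<And>\<psi>. cnonneg (qform (idx d n) (idx d n) (tensor_pow \<rho> n) \<psi>)"
    and "\<exists>Js :: 'j set. \<exists>A B. finite Js \<and> (\<forall>z\<in>{..<d} \<times> {..<d}. \<forall>z'\<in>{..<d} \<times> {..<d}.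
      partial_transpose \<rho>' z z' =
      (\<Sum>j\<in>Js. local_sandwich {..<d} {..<d} (A j) (B j) (partial_transpose \<rho>) z z'))"
  shows "pseudo_n_copy_undist d n \<rho>'"
proof -
  obtain Js :: "'j set" and A B where "finite Js" and local: "\<forall>z\<in>{..<d} \<times> {..<d}. \<forall>z'\<in>{..<d} \<times> {..<d}.
      partial_transpose \<rho>' z z' =
      (\<Sum>j\<in>Js. local_sandwich {..<d} {..<d} (A j) (B j) (partial_transpose \<rho>) z z')"
    using assms(3) by blast
  have "cnonneg (qform (idx d n) (idx d n) (tensor_pow (partial_transpose \<rho>) n) \<psi>)"
    if "schmidt_rank_le2 (idx d n) (idx d n) \<psi>" for \<psi>
    using pseudo_one_copy_undist_schmidt_rank_le2[OF _ psd that] undist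
    unfolding pseudo_n_copy_undist_def partial_transpose_tensor_pow by blast
  then show ?thesis
    unfolding pseudo_n_copy_undist_def pseudo_one_copy_undist_def partial_transpose_tensor_pow
      idx_eq_nlists
    by (auto intro: qform_tensor_pow_local_sum_nonneg[OF \<open>finite Js\<close> finite_lessThan local[rule_format]]
        schmidt_rank_two_le2)
qed

theorem lemma4:
  fixes d n :: nat and b c :: real
  assumes "d \<ge> 2" and "n \<ge> 1"
    and "pseudo_n_copy_undist d n
           (rho_bc d (3 / (real d * (2 * real d - 1))) (1 / (real d * (2 * real d - 1))))"
    and "(b, c) \<in> convex hull {(1 / (real d * (real d - 1)), 0),
                               (3 / (real d * (2 * real d - 1)), 1 / (real d * (2 * real d - 1))),
                               (1 / (real d * (real d - 1)), 1 / (real d * (real d - 1)))}"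
  shows "pseudo_n_copy_undist d n (rho_bc d b c)"
proof -
  define bK where "bK = 1 / (real d * (real d - 1))"
  define bG where "bG = 3 / (real d * (2 * real d - 1))"
  define cG where "cG = 1 / (real d * (2 * real d - 1))"
  obtain u v w where uvw: "0 \<le> u" "0 \<le> v" "0 \<le> w" "u + v + w = 1"
    and "(b, c) = u *\<^sub>R (bK, 0) + v *\<^sub>R (bG, cG) + w *\<^sub>R (bK, bK)"
    using assms(4) unfolding convex_hull_3 bK_def bG_def cG_def by blast
  then have b: "b = u * bK + v * bG + w * bK" and c: "c = v * cG + w * bK"
    by auto
  show ?thesis
    by (rule pseudo_n_copy_undist_local_transfer[OF assms(3)[folded bG_def cG_def]
          rho_bc_G_tensor_pow_psd[OF assms(1), folded bG_def cG_def]
          rho_bc_triangle_local_decomposition[OF assms(1) bK_def bG_def cG_def uvw b c]])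
qed

end
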